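(* Consider coins $i=1,\dots,N$, where coin $i$ comes up heads with probability $p_i$ and $p_1,\dots,p_N$ are drawn independently from $\mathrm{Beta}(\alpha,\beta)$. Each example $z=(z^{(1)},\dots,z^{(N)})\in\{0,1\}^N$ records the outcome of one flip of every coin, and the training set consists of $n$ independent such examples. A hypothesis is a vector $\theta\in(0,1)^N$ of estimated head probabilities, with loss \[ \ell(z,\theta)=-\sum_{i=1}^N\big[z^{(i)}\log\theta_i+(1-z^{(i)})\log(1-\theta_i)\big]. \] Then a Bayes-optimal regularizer is \[ \mathrm{LogitBeta}(\theta)=-\frac1n\sum_{i=1}^N\big[\alpha\log(\theta_i)+\beta\log(1-\theta_i)\big]. \]
   Context: The training loss is $\hat L(\theta)=\frac1n\sum_{j=1}^n\ell(z_j,\theta)$. For a training set $Z$, the conditional expected test loss is $\bar L(\theta,Z)=\mathbb{E}[\mathbb{E}_{z}[\ell(z,\theta)]\mid Z]$, where the inner expectation is over a fresh example given $p_1,\dots,p_N$ and the outer is over the posterior of $p_1,\dots,p_N$. A regularizer $R^*$ is Bayes-optimal if $\arg\min_{\theta}\{\hat L(\theta)+R^*(\theta)\}=\arg\min_{\theta}\{\bar L(\theta,Z)\}$. *)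

theory Defs
  imports "HOL-Probability.Probability"
begin

text \<open>Coins are indexed by i < N, examples by j < n.  An example is a function
  z :: nat => bool (z i = True means coin i came up heads); a training set is
  Z :: nat => nat => bool, with Z j the j-th example.\<close>

definition beta_density :: "real \<Rightarrow> real \<Rightarrow> real \<Rightarrow> real" where
  "beta_density a b x =
     (if 0 < x \<and> x < 1 then x powr (a - 1) * (1 - x) powr (b - 1) / Beta a b else 0)"

definition coin_prior :: "nat \<Rightarrow> real \<Rightarrow> real \<Rightarrow> (nat \<Rightarrow> real) measure" where
  "coin_prior N a b = PiM {..<N} (\<lambda>_. density lborel (\<lambda>x. ennreal (beta_density a b x)))"

definition example_prob :: "nat \<Rightarrow> (nat \<Rightarrow> real) \<Rightarrow> (nat \<Rightarrow> bool) \<Rightarrow> real" where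
  "example_prob N p z = (\<Prod>i<N. if z i then p i else 1 - p i)"

definition examples :: "nat \<Rightarrow> (nat \<Rightarrow> bool) set" where
  "examples N = PiE {..<N} (\<lambda>_. UNIV)"

definition loss :: "nat \<Rightarrow> (nat \<Rightarrow> bool) \<Rightarrow> (nat \<Rightarrow> real) \<Rightarrow> real" where
  "loss N z \<theta> = - (\<Sum>i<N. of_bool (z i) * ln (\<theta> i) + (1 - of_bool (z i)) * ln (1 - \<theta> i))"

definition train_loss :: "nat \<Rightarrow> nat \<Rightarrow> (nat \<Rightarrow> nat \<Rightarrow> bool) \<Rightarrow> (nat \<Rightarrow> real) \<Rightarrow> real" where
  "train_loss N n Z \<theta> = (\<Sum>j<n. loss N (Z j) \<theta>) / real n"

definition likelihood :: "nat \<Rightarrow> nat \<Rightarrow> (nat \<Rightarrow> nat \<Rightarrow> bool) \<Rightarrow> (nat \<Rightarrow> real) \<Rightarrow> real" where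
  "likelihood N n Z p = (\<Prod>j<n. example_prob N p (Z j))"

definition posterior_expectation ::
  "nat \<Rightarrow> nat \<Rightarrow> real \<Rightarrow> real \<Rightarrow> (nat \<Rightarrow> nat \<Rightarrow> bool) \<Rightarrow> ((nat \<Rightarrow> real) \<Rightarrow> real) \<Rightarrow> real" where
  "posterior_expectation N n a b Z g =
     (\<integral>p. g p * likelihood N n Z p \<partial>coin_prior N a b) / (\<integral>p. likelihood N n Z p \<partial>coin_prior N a b)"

definition expected_test_loss ::
  "nat \<Rightarrow> nat \<Rightarrow> real \<Rightarrow> real \<Rightarrow> (nat \<Rightarrow> nat \<Rightarrow> bool) \<Rightarrow> (nat \<Rightarrow> real) \<Rightarrow> real" where
  "expected_test_loss N n a b Z \<theta> =
     posterior_expectation N n a b Z (\<lambda>p. \<Sum>z\<in>examples N. example_prob N p z * loss N z \<theta>)"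

definition hypotheses :: "nat \<Rightarrow> (nat \<Rightarrow> real) set" where
  "hypotheses N = PiE {..<N} (\<lambda>_. {0<..<1})"

definition argmin_on :: "'a set \<Rightarrow> ('a \<Rightarrow> real) \<Rightarrow> 'a set" where
  "argmin_on S f = {x \<in> S. \<forall>y\<in>S. f x \<le> f y}"

definition bayes_optimal :: "nat \<Rightarrow> nat \<Rightarrow> real \<Rightarrow> real \<Rightarrow> ((nat \<Rightarrow> real) \<Rightarrow> real) \<Rightarrow> bool" where
  "bayes_optimal N n a b R \<longleftrightarrow>
     (\<forall>Z. argmin_on (hypotheses N) (\<lambda>\<theta>. train_loss N n Z \<theta> + R \<theta>)
          = argmin_on (hypotheses N) (expected_test_loss N n a b Z))"

definition logit_beta :: "nat \<Rightarrow> nat \<Rightarrow> real \<Rightarrow> real \<Rightarrow> (nat \<Rightarrow> real) \<Rightarrow> real" where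
  "logit_beta N n a b \<theta> = - (1 / real n) * (\<Sum>i<N. a * ln (\<theta> i) + b * ln (1 - \<theta> i))"

end

theory Submission
  imports Defs
begin

(* Given k_i heads of coin i among the n examples, the posterior of p_i is
   Beta(alpha + k_i, beta + n - k_i), with mean (alpha + k_i) / (alpha + beta + n).  The expected
   loss of a fresh example is affine in p, so the expected test loss is the cross-entropy of theta
   against this posterior mean, i.e. -1/(alpha + beta + n) times the Bernoulli log-likelihood of
   theta for alpha + k_i heads and beta + n - k_i tails.  The training loss plus LogitBeta is -1/n
   times the same log-likelihood: the prior contributes alpha pseudo-heads and beta pseudo-tails.
   The two objectives differ by a positive factor and so have the same minimizers. *)

section \<open>The Beta distribution\<close>

lemma Beta_real_pos: "a > 0 \<Longrightarrow> b > 0 \<Longrightarrow> Beta a b > (0::real)"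
  unfolding Beta_def by (simp add: Gamma_real_pos)

lemma Beta_plus1_left_real:
  fixes a b :: real
  assumes "a > 0" "b > 0"
  shows "Beta (a + 1) b = a / (a + b) * Beta a b"
proof -
  have "a \<notin> \<int>\<^sub>\<le>\<^sub>0" using assms by (auto elim!: nonpos_Ints_cases)
  from Beta_plus1_left[OF this, of b] show ?thesis
    using assms by (simp add: field_simps)
qed

definition beta_kernel :: "real \<Rightarrow> real \<Rightarrow> real \<Rightarrow> real" where
  "beta_kernel a b x = (if 0 < x \<and> x < 1 then x powr (a - 1) * (1 - x) powr (b - 1) else 0)"

lemma beta_density_eq_kernel: "beta_density a b x = beta_kernel a b x / Beta a b"
  unfolding beta_density_def beta_kernel_def by simp

lemma beta_kernel_mult_powers:
  "x ^ m * (1 - x) ^ l * beta_kernel a b x = beta_kernel (a + real m) (b + real l) x"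
proof (cases "0 < x \<and> x < 1")
  case True
  then have "x powr (a + real m - 1) = x powr (a - 1) * x ^ m"
    and "(1 - x) powr (b + real l - 1) = (1 - x) powr (b - 1) * (1 - x) ^ l"
    by (simp_all add: powr_add[symmetric] powr_realpow[symmetric] algebra_simps)
  then show ?thesis
    using True by (simp add: beta_kernel_def)
qed (auto simp: beta_kernel_def)

lemma
  fixes a b :: real
  assumes "a > 0" "b > 0"
  shows integrable_beta_kernel: "integrable lborel (beta_kernel a b)"
    and integral_beta_kernel: "(\<integral>x. beta_kernel a b x \<partial>lborel) = Beta a b"
proof -
  have kernel: "beta_kernel a b = (\<lambda>x. indicator {0..1} x *\<^sub>R (x powr (a - 1) * (1 - x) powr (b - 1)))"
    by (auto simp: beta_kernel_def indicator_def fun_eq_iff)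
  have set_int: "set_integrable lborel {0..1} (\<lambda>x::real. x powr (a - 1) * (1 - x) powr (b - 1))"
    by (rule integrable_Beta[OF assms])
  then show "integrable lborel (beta_kernel a b)"
    unfolding kernel set_integrable_def .
  have "(LINT x : {0..1} | lborel. x powr (a - 1) * (1 - x) powr (b - 1))
      = integral {0..1} (\<lambda>x::real. x powr (a - 1) * (1 - x) powr (b - 1))"
    by (rule set_borel_integral_eq_integral(2)[OF set_int])
  also have "\<dots> = Beta a b"
    using has_integral_Beta_real[OF assms] by (rule integral_unique)
  finally show "(\<integral>x. beta_kernel a b x \<partial>lborel) = Beta a b"
    unfolding kernel set_lebesgue_integral_def .
qed

lemma borel_measurable_beta_density[measurable]: "beta_density a b \<in> borel_measurable borel"
  unfolding beta_density_def by measurable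

definition beta_measure :: "real \<Rightarrow> real \<Rightarrow> real measure" where
  "beta_measure a b = density lborel (\<lambda>x. ennreal (beta_density a b x))"

lemma coin_prior_eq_PiM: "coin_prior N a b = Pi\<^sub>M {..<N} (\<lambda>_. beta_measure a b)"
  unfolding coin_prior_def beta_measure_def ..

lemma beta_density_nonneg: "a > 0 \<Longrightarrow> b > 0 \<Longrightarrow> beta_density a b x \<ge> 0"
  using Beta_real_pos[of a b] by (simp add: beta_density_def)

lemma
  fixes a b :: real
  assumes "a > 0" "b > 0"
  shows integrable_beta_moment: "integrable (beta_measure a b) (\<lambda>x. x ^ m * (1 - x) ^ l)"
    and integral_beta_moment:
      "(\<integral>x. x ^ m * (1 - x) ^ l \<partial>beta_measure a b) = Beta (a + real m) (b + real l) / Beta a b"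
proof -
  have nonneg: "AE x in lborel. 0 \<le> beta_density a b x"
    using beta_density_nonneg[OF assms] by simp
  have weighted: "(\<lambda>x. beta_density a b x * (x ^ m * (1 - x) ^ l))
      = (\<lambda>x. beta_kernel (a + real m) (b + real l) x / Beta a b)"
    by (simp add: fun_eq_iff beta_density_eq_kernel beta_kernel_mult_powers[symmetric] mult_ac)
  have pos: "a + real m > 0" "b + real l > 0" using assms by auto
  have "integrable lborel (\<lambda>x. beta_density a b x * (x ^ m * (1 - x) ^ l))"
    unfolding weighted by (intro integrable_divide integrable_beta_kernel[OF pos])
  then show "integrable (beta_measure a b) (\<lambda>x. x ^ m * (1 - x) ^ l)"
    unfolding beta_measure_def by (subst integrable_density[OF _ _ nonneg]) auto
  show "(\<integral>x. x ^ m * (1 - x) ^ l \<partial>beta_measure a b) = Beta (a + real m) (b + real l) / Beta a b"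
    unfolding beta_measure_def
    by (subst integral_density[OF _ _ nonneg]) (simp_all add: weighted integral_beta_kernel[OF pos])
qed

lemma prob_space_beta_measure:
  assumes "a > 0" "b > 0"
  shows "prob_space (beta_measure a b)"
proof
  have "emeasure (beta_measure a b) (space (beta_measure a b)) = (\<integral>\<^sup>+x. ennreal (beta_density a b x) \<partial>lborel)"
    by (simp add: beta_measure_def emeasure_density)
  also have "\<dots> = ennreal (\<integral>x. beta_density a b x \<partial>lborel)"
    using integrable_beta_moment[OF assms, of 0 0] beta_density_nonneg[OF assms]
    by (intro nn_integral_eq_integral)
       (simp_all add: beta_density_eq_kernel integrable_beta_kernel[OF assms])
  also have "\<dots> = 1"
    using Beta_real_pos[OF assms]
    by (simp add: beta_density_eq_kernel integral_beta_kernel[OF assms])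
  finally show "emeasure (beta_measure a b) (space (beta_measure a b)) = 1" .
qed

section \<open>Log-likelihoods of Bernoulli parameters\<close>

definition bernoulli_loglik ::
  "nat \<Rightarrow> (nat \<Rightarrow> real) \<Rightarrow> (nat \<Rightarrow> real) \<Rightarrow> (nat \<Rightarrow> real) \<Rightarrow> real" where
  "bernoulli_loglik N h t \<theta> = (\<Sum>i<N. h i * ln (\<theta> i) + t i * ln (1 - \<theta> i))"

lemma bernoulli_loglik_add:
  "bernoulli_loglik N h t \<theta> + bernoulli_loglik N h' t' \<theta>
     = bernoulli_loglik N (\<lambda>i. h i + h' i) (\<lambda>i. t i + t' i) \<theta>"
  unfolding bernoulli_loglik_def by (simp add: sum.distrib[symmetric] algebra_simps)

lemma bernoulli_loglik_scale:
  "c * bernoulli_loglik N h t \<theta> = bernoulli_loglik N (\<lambda>i. c * h i) (\<lambda>i. c * t i) \<theta>"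
  unfolding bernoulli_loglik_def by (simp add: sum_distrib_left algebra_simps)

lemma sum_examples_coin:
  assumes "i < N"
  shows "(\<Sum>z\<in>examples N. example_prob N p z * g (z i)) = p i * g True + (1 - p i) * g False"
proof -
  define f where "f j y = (if y then p j else 1 - p j) * (if j = i then g y else 1)" for j y
  have "(\<Sum>z\<in>examples N. example_prob N p z * g (z i)) = (\<Sum>z\<in>examples N. \<Prod>j<N. f j (z j))"
    using assms by (intro sum.cong refl)
      (simp add: f_def prod.distrib example_prob_def prod.delta)
  also have "\<dots> = (\<Prod>j<N. \<Sum>y\<in>UNIV. f j y)"
    unfolding examples_def by (rule prod_sum_PiE[symmetric]) auto
  also have "\<dots> = (\<Prod>j<N. if j = i then p i * g True + (1 - p i) * g False else 1)"
    by (rule prod.cong) (auto simp: f_def UNIV_bool)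
  also have "\<dots> = p i * g True + (1 - p i) * g False"
    using assms by (simp add: prod.delta)
  finally show ?thesis .
qed

lemma expected_example_loss:
  "(\<Sum>z\<in>examples N. example_prob N p z * loss N z \<theta>) = - bernoulli_loglik N p (\<lambda>i. 1 - p i) \<theta>"
proof -
  have "(\<Sum>z\<in>examples N. example_prob N p z * loss N z \<theta>)
      = - (\<Sum>i<N. \<Sum>z\<in>examples N. example_prob N p z *
              (\<lambda>y. of_bool y * ln (\<theta> i) + (1 - of_bool y) * ln (1 - \<theta> i)) (z i))"
    unfolding loss_def by (simp add: sum_distrib_left sum_negf sum.swap[of _ "examples N"])
  also have "\<dots> = - bernoulli_loglik N p (\<lambda>i. 1 - p i) \<theta>"
    unfolding bernoulli_loglik_def
    by (intro arg_cong[where f=uminus] sum.cong refl, subst sum_examples_coin) auto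
  finally show ?thesis .
qed

section \<open>Head counts of a training set\<close>

definition heads :: "nat \<Rightarrow> (nat \<Rightarrow> nat \<Rightarrow> bool) \<Rightarrow> nat \<Rightarrow> nat" where
  "heads n Z i = card ({..<n} \<inter> {j. Z j i})"

lemma heads_le: "heads n Z i \<le> n"
  unfolding heads_def by (rule order_trans[OF card_mono[of "{..<n}"]]) auto

lemma card_tails: "card ({..<n} \<inter> - {j. Z j i}) = n - heads n Z i"
proof -
  have "card ({..<n} \<inter> {j. Z j i}) + card ({..<n} \<inter> - {j. Z j i})
      = card ({..<n} \<inter> {j. Z j i} \<union> {..<n} \<inter> - {j. Z j i})"
    by (rule card_Un_disjoint[symmetric]) auto
  also have "{..<n} \<inter> {j. Z j i} \<union> {..<n} \<inter> - {j. Z j i} = {..<n}" by auto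
  finally show ?thesis unfolding heads_def by simp
qed

lemma likelihood_eq_powers:
  "likelihood N n Z p = (\<Prod>i<N. p i ^ heads n Z i * (1 - p i) ^ (n - heads n Z i))"
proof -
  have "likelihood N n Z p = (\<Prod>i<N. \<Prod>j<n. if Z j i then p i else 1 - p i)"
    unfolding likelihood_def example_prob_def by (rule prod.swap)
  also have "\<dots> = (\<Prod>i<N. p i ^ heads n Z i * (1 - p i) ^ (n - heads n Z i))"
    by (intro prod.cong refl, subst prod.If_cases) (auto simp: card_tails heads_def)
  finally show ?thesis .
qed

lemma coin_times_likelihood_eq_powers:
  assumes "i < N"
  shows "p i * likelihood N n Z p
    = (\<Prod>j<N. p j ^ (heads n Z j + of_bool (j = i)) * (1 - p j) ^ (n - heads n Z j))"
proof -
  have "(\<Prod>j<N. p j ^ (heads n Z j + of_bool (j = i)) * (1 - p j) ^ (n - heads n Z j))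
      = (\<Prod>j<N. p j ^ of_bool (j = i)) * likelihood N n Z p"
    unfolding likelihood_eq_powers prod.distrib[symmetric] by (simp add: power_add mult_ac)
  also have "(\<Prod>j<N. p j ^ of_bool (j = i)) = p i"
    using assms by (subst prod.cong[OF refl, of _ _ "\<lambda>j. if j = i then p j else 1"]) auto
  finally show ?thesis ..
qed

lemma train_loss_eq_loglik:
  "train_loss N n Z \<theta>
     = - (1 / real n) * bernoulli_loglik N (\<lambda>i. heads n Z i) (\<lambda>i. real n - heads n Z i) \<theta>"
proof -
  have "(\<Sum>j<n. loss N (Z j) \<theta>)
      = - (\<Sum>i<N. \<Sum>j<n. of_bool (Z j i) * ln (\<theta> i) + (1 - of_bool (Z j i)) * ln (1 - \<theta> i))"
    unfolding loss_def by (simp add: sum_negf sum.swap[of _ "{..<n}"])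
  also have "\<dots> = - bernoulli_loglik N (\<lambda>i. heads n Z i) (\<lambda>i. real n - heads n Z i) \<theta>"
    unfolding bernoulli_loglik_def
    by (simp add: sum.distrib sum_distrib_right[symmetric] sum_subtractf heads_def)
  finally show ?thesis unfolding train_loss_def by simp
qed

section \<open>The posterior of the coin biases\<close>

lemma
  fixes a b :: real and m l :: "nat \<Rightarrow> nat"
  assumes "a > 0" "b > 0"
  shows integrable_coin_prior_powers:
      "integrable (coin_prior N a b) (\<lambda>p. \<Prod>i<N. p i ^ m i * (1 - p i) ^ l i)"
    and integral_coin_prior_powers:
      "(\<integral>p. (\<Prod>i<N. p i ^ m i * (1 - p i) ^ l i) \<partial>coin_prior N a b)
         = (\<Prod>i<N. Beta (a + real (m i)) (b + real (l i)) / Beta a b)"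
proof -
  interpret product_sigma_finite "\<lambda>_::nat. beta_measure a b"
    using prob_space_beta_measure[OF assms]
    by (simp add: product_sigma_finite_def prob_space_imp_sigma_finite)
  show "integrable (coin_prior N a b) (\<lambda>p. \<Prod>i<N. p i ^ m i * (1 - p i) ^ l i)"
    unfolding coin_prior_eq_PiM
    by (rule product_integrable_prod[of _ "\<lambda>i x. x ^ m i * (1 - x) ^ l i"])
       (simp_all add: integrable_beta_moment[OF assms])
  show "(\<integral>p. (\<Prod>i<N. p i ^ m i * (1 - p i) ^ l i) \<partial>coin_prior N a b)
      = (\<Prod>i<N. Beta (a + real (m i)) (b + real (l i)) / Beta a b)"
    unfolding coin_prior_eq_PiM
    by (subst product_integral_prod[of _ "\<lambda>i x. x ^ m i * (1 - x) ^ l i"])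
       (simp_all add: integrable_beta_moment[OF assms] integral_beta_moment[OF assms])
qed

lemma
  fixes a b :: real
  assumes "a > 0" "b > 0"
  shows integrable_likelihood: "integrable (coin_prior N a b) (likelihood N n Z)"
    and integral_likelihood_pos: "(\<integral>p. likelihood N n Z p \<partial>coin_prior N a b) > 0"
proof -
  have L: "likelihood N n Z = (\<lambda>p. \<Prod>i<N. p i ^ heads n Z i * (1 - p i) ^ (n - heads n Z i))"
    by (rule ext) (rule likelihood_eq_powers)
  show "integrable (coin_prior N a b) (likelihood N n Z)"
    unfolding L by (rule integrable_coin_prior_powers[OF assms])
  show "(\<integral>p. likelihood N n Z p \<partial>coin_prior N a b) > 0"
    unfolding L integral_coin_prior_powers[OF assms]
    using assms by (intro prod_pos divide_pos_pos Beta_real_pos) auto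
qed

lemma integrable_coin_times_likelihood:
  fixes a b :: real
  assumes "a > 0" "b > 0" "i < N"
  shows "integrable (coin_prior N a b) (\<lambda>p. p i * likelihood N n Z p)"
  unfolding coin_times_likelihood_eq_powers[OF \<open>i < N\<close>]
  by (rule integrable_coin_prior_powers[OF assms(1,2)])

lemma posterior_mean_coin:
  fixes a b :: real
  assumes a: "a > 0" and b: "b > 0" and i: "i < N"
  shows "posterior_expectation N n a b Z (\<lambda>p. p i) = (a + heads n Z i) / (a + b + real n)"
proof -
  define k where "k = heads n Z"
  define c where "c = (a + k i) / (a + b + real n)"
  define B where "B e j = Beta (a + real (k j + e)) (b + real (n - k j)) / Beta a b" for e j
  have "Beta (a + real (k i) + 1) (b + real (n - k i))
      = (a + k i) / (a + k i + (b + real (n - k i))) * Beta (a + real (k i)) (b + real (n - k i))"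
    using a b by (intro Beta_plus1_left_real) auto
  also have "a + k i + (b + real (n - k i)) = a + b + real n"
    using heads_le[of n Z i] by (simp add: k_def of_nat_diff)
  finally have "B 1 i = c * B 0 i"
    by (simp add: B_def c_def add_ac)
  then have "(\<Prod>j<N. B (of_bool (j = i)) j) = (\<Prod>j<N. (if j = i then c else 1) * B 0 j)"
    by (intro prod.cong) auto
  also have "\<dots> = c * (\<Prod>j<N. B 0 j)"
    using i by (simp add: prod.distrib)
  finally have ratio: "(\<Prod>j<N. B (of_bool (j = i)) j) = c * (\<Prod>j<N. B 0 j)" .
  have evidence: "(\<integral>p. likelihood N n Z p \<partial>coin_prior N a b) = (\<Prod>j<N. B 0 j)"
    using integral_coin_prior_powers[OF a b, of N k "\<lambda>j. n - k j"]
    by (simp add: likelihood_eq_powers B_def k_def)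
  have numerator: "(\<integral>p. p i * likelihood N n Z p \<partial>coin_prior N a b) = (\<Prod>j<N. B (of_bool (j = i)) j)"
    using integral_coin_prior_powers[OF a b, of N "\<lambda>j. k j + of_bool (j = i)" "\<lambda>j. n - k j"]
    by (simp add: coin_times_likelihood_eq_powers[OF i] B_def k_def)
  have "(\<Prod>j<N. B 0 j) \<noteq> 0"
    using integral_likelihood_pos[OF a b, of N n Z] by (simp only: evidence)
  then have "posterior_expectation N n a b Z (\<lambda>p. p i) = c"
    by (simp add: posterior_expectation_def numerator evidence ratio)
  then show ?thesis
    by (simp add: c_def k_def)
qed

lemma posterior_expectation_affine:
  fixes a b :: real
  assumes a: "a > 0" and b: "b > 0"
  shows "posterior_expectation N n a b Z (\<lambda>p. \<Sum>i<N. c i * p i + d i)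
    = (\<Sum>i<N. c i * posterior_expectation N n a b Z (\<lambda>p. p i) + d i)"
proof -
  define L where "L = likelihood N n Z"
  define D where "D = (\<integral>p. L p \<partial>coin_prior N a b)"
  have int_L: "integrable (coin_prior N a b) L"
    unfolding L_def by (rule integrable_likelihood[OF a b])
  have int_pL: "integrable (coin_prior N a b) (\<lambda>p. p i * L p)" if "i < N" for i
    unfolding L_def by (rule integrable_coin_times_likelihood[OF a b that])
  have "(\<integral>p. (\<Sum>i<N. c i * p i + d i) * L p \<partial>coin_prior N a b)
      = (\<integral>p. (\<Sum>i<N. c i * (p i * L p) + d i * L p) \<partial>coin_prior N a b)"
    by (simp only: sum_distrib_right) (simp add: algebra_simps)
  also have "\<dots> = (\<Sum>i<N. c i * (\<integral>p. p i * L p \<partial>coin_prior N a b) + d i * D)"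
    using int_L int_pL by (simp add: Bochner_Integration.integral_sum D_def)
  finally have "(\<integral>p. (\<Sum>i<N. c i * p i + d i) * L p \<partial>coin_prior N a b) / D
      = (\<Sum>i<N. c i * ((\<integral>p. p i * L p \<partial>coin_prior N a b) / D) + d i)"
    using integral_likelihood_pos[OF a b, of N n Z]
    by (simp add: sum_divide_distrib add_divide_distrib D_def L_def)
  then show ?thesis
    by (simp add: posterior_expectation_def D_def L_def)
qed

lemma expected_test_loss_eq_loglik:
  fixes a b :: real
  assumes a: "a > 0" and b: "b > 0"
  shows "expected_test_loss N n a b Z \<theta>
    = - (1 / (a + b + real n)) *
        bernoulli_loglik N (\<lambda>i. a + heads n Z i) (\<lambda>i. b + (real n - heads n Z i)) \<theta>"
proof -
  define s where "s = a + b + real n"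
  define m where "m i = (a + heads n Z i) / s" for i
  have s: "s > 0" using a b by (simp add: s_def)
  have compl_m: "1 - m i = (b + (real n - heads n Z i)) / s" for i
    using s by (simp add: m_def s_def field_simps)
  define c where "c i = ln (1 - \<theta> i) - ln (\<theta> i)" for i
  define d where "d i = - ln (1 - \<theta> i)" for i
  have integrand: "(\<Sum>z\<in>examples N. example_prob N p z * loss N z \<theta>) = (\<Sum>i<N. c i * p i + d i)" for p
    unfolding expected_example_loss bernoulli_loglik_def sum_negf[symmetric]
    by (intro arg_cong[where f=uminus] sum.cong refl) (simp add: c_def d_def algebra_simps)
  have "expected_test_loss N n a b Z \<theta> = (\<Sum>i<N. c i * m i + d i)"
    unfolding expected_test_loss_def integrand posterior_expectation_affine[OF a b]
    by (simp add: posterior_mean_coin[OF a b] m_def s_def)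
  also have "\<dots> = - bernoulli_loglik N m (\<lambda>i. 1 - m i) \<theta>"
    unfolding bernoulli_loglik_def sum_negf[symmetric]
    by (intro arg_cong[where f=uminus] sum.cong refl) (simp add: c_def d_def algebra_simps)
  also have "bernoulli_loglik N m (\<lambda>i. 1 - m i) \<theta>
      = (1 / s) * bernoulli_loglik N (\<lambda>i. a + heads n Z i) (\<lambda>i. b + (real n - heads n Z i)) \<theta>"
    unfolding bernoulli_loglik_scale compl_m by (simp add: m_def[abs_def])
  finally show ?thesis
    by (simp add: s_def)
qed

lemma expected_test_loss_eq_regularized_train_loss:
  fixes a b :: real
  assumes a: "a > 0" and b: "b > 0" and n: "n > 0"
  shows "expected_test_loss N n a b Z \<theta>
    = real n / (a + b + real n) * (train_loss N n Z \<theta> + logit_beta N n a b \<theta>)"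
proof -
  have "expected_test_loss N n a b Z \<theta> = real n / (a + b + real n) * (- (1 / real n) *
      bernoulli_loglik N (\<lambda>i. a + heads n Z i) (\<lambda>i. b + (real n - heads n Z i)) \<theta>)"
    using a b n by (simp add: expected_test_loss_eq_loglik)
  also have "bernoulli_loglik N (\<lambda>i. a + heads n Z i) (\<lambda>i. b + (real n - heads n Z i)) \<theta>
      = bernoulli_loglik N (\<lambda>_. a) (\<lambda>_. b) \<theta>
        + bernoulli_loglik N (\<lambda>i. heads n Z i) (\<lambda>i. real n - heads n Z i) \<theta>"
    by (simp only: bernoulli_loglik_add)
  also have "- (1 / real n) * \<dots> = train_loss N n Z \<theta> + logit_beta N n a b \<theta>"
    unfolding train_loss_eq_loglik logit_beta_def bernoulli_loglik_def by (simp add: algebra_simps)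
  finally show ?thesis .
qed

lemma argmin_on_scale:
  assumes "c > 0"
  shows "argmin_on S (\<lambda>x. c * f x) = argmin_on S f"
  using assms by (simp add: argmin_on_def)

theorem corollary1:
  fixes N n :: nat and \<alpha> \<beta> :: real
  assumes "\<alpha> > 0" and "\<beta> > 0" and "n > 0"
  shows "bayes_optimal N n \<alpha> \<beta> (logit_beta N n \<alpha> \<beta>)"
proof -
  define c where "c = real n / (\<alpha> + \<beta> + real n)"
  have "c > 0"
    using assms by (simp add: c_def)
  have "expected_test_loss N n \<alpha> \<beta> Z = (\<lambda>\<theta>. c * (train_loss N n Z \<theta> + logit_beta N n \<alpha> \<beta> \<theta>))" for Z
    unfolding c_def by (rule ext) (rule expected_test_loss_eq_regularized_train_loss[OF assms])
  then show ?thesis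
    by (simp add: bayes_optimal_def argmin_on_scale[OF \<open>c > 0\<close>])
qed

end
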